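(* Let $p$ be any prime and $k$ a field of characteristic $p$. Then $L_1\neq L_2$.
   Context: Let $X=\{x_1,x_2,\ldots\}$ be a countably infinite set and let $k_0\langle X\rangle$ denote the free associative $k$-algebra (without identity) on $X$. A $T$-space of $k_0\langle X\rangle$ is a $k$-linear subspace closed under every algebra endomorphism of $k_0\langle X\rangle$; the $T$-space generated by a subset is the smallest $T$-space containing it. Let $L_1$ be the $T$-space generated by $x_1^p$, and let $L_2$ be the $T$-space generated by $L_1$ together with all products $u\,v^p$ with $u\in L_1$, $v\in k_0\langle X\rangle$ (equivalently, the $T$-space generated by $x_1^p$ and $x_1^px_2^p$). *)

theory Defs
  imports Main "HOL-Computational_Algebra.Primes"
begin

text \<open>The free associative k-algebra without identity on countably many variables
x_0, x_1, x_2, ... : elements are finitely supported coefficient functions on words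
(lists of variable indices), with zero coefficient on the empty word.
The variable x_i of the paper is represented by index i.\<close>

definition FA :: "(nat list \<Rightarrow> 'k::field) set" where
  "FA = {f. finite {w. f w \<noteq> 0} \<and> f [] = 0}"

definition fa_zero :: "nat list \<Rightarrow> 'k::field" where
  "fa_zero = (\<lambda>w. 0)"

definition fa_add :: "(nat list \<Rightarrow> 'k::field) \<Rightarrow> (nat list \<Rightarrow> 'k) \<Rightarrow> (nat list \<Rightarrow> 'k)" where
  "fa_add f g = (\<lambda>w. f w + g w)"

definition fa_smul :: "'k::field \<Rightarrow> (nat list \<Rightarrow> 'k) \<Rightarrow> (nat list \<Rightarrow> 'k)" where
  "fa_smul c f = (\<lambda>w. c * f w)"

definition fa_mul :: "(nat list \<Rightarrow> 'k::field) \<Rightarrow> (nat list \<Rightarrow> 'k) \<Rightarrow> (nat list \<Rightarrow> 'k)" where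
  "fa_mul f g = (\<lambda>w. \<Sum>i\<le>length w. f (take i w) * g (drop i w))"

definition fa_var :: "nat \<Rightarrow> (nat list \<Rightarrow> 'k::field)" where
  "fa_var i = (\<lambda>w. if w = [i] then 1 else 0)"

text \<open>Positive powers: fa_pow f n = f^n for n \<ge> 1.\<close>
definition fa_pow :: "(nat list \<Rightarrow> 'k::field) \<Rightarrow> nat \<Rightarrow> (nat list \<Rightarrow> 'k)" where
  "fa_pow f n = ((fa_mul f) ^^ (n - 1)) f"

definition is_endo :: "((nat list \<Rightarrow> 'k::field) \<Rightarrow> (nat list \<Rightarrow> 'k)) \<Rightarrow> bool" where
  "is_endo h \<longleftrightarrow>
     (\<forall>f\<in>FA. h f \<in> FA) \<and>
     (\<forall>f\<in>FA. \<forall>g\<in>FA. h (fa_add f g) = fa_add (h f) (h g)) \<and>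
     (\<forall>c. \<forall>f\<in>FA. h (fa_smul c f) = fa_smul c (h f)) \<and>
     (\<forall>f\<in>FA. \<forall>g\<in>FA. h (fa_mul f g) = fa_mul (h f) (h g))"

definition is_Tspace :: "(nat list \<Rightarrow> 'k::field) set \<Rightarrow> bool" where
  "is_Tspace V \<longleftrightarrow>
     V \<subseteq> FA \<and> fa_zero \<in> V \<and>
     (\<forall>f\<in>V. \<forall>g\<in>V. fa_add f g \<in> V) \<and>
     (\<forall>c. \<forall>f\<in>V. fa_smul c f \<in> V) \<and>
     (\<forall>h. is_endo h \<longrightarrow> (\<forall>f\<in>V. h f \<in> V))"

definition Tgen :: "(nat list \<Rightarrow> 'k::field) set \<Rightarrow> (nat list \<Rightarrow> 'k) set" where
  "Tgen S = \<Inter>{V. is_Tspace V \<and> S \<subseteq> V}"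

definition L1 :: "nat \<Rightarrow> (nat list \<Rightarrow> 'k::field) set" where
  "L1 p = Tgen {fa_pow (fa_var 1) p}"

definition L2 :: "nat \<Rightarrow> (nat list \<Rightarrow> 'k::field) set" where
  "L2 p = Tgen (L1 p \<union> {fa_mul u (fa_pow v p) | u v. u \<in> L1 p \<and> v \<in> FA})"

end

theory Submission
  imports Defs "HOL-Number_Theory.Cong"
begin

text \<open>
  Let \<psi>(f) be the sum of the coefficients of f on the words of length 2p in x1, x2 that are
  not p-th powers of a word. The coefficient of such a word w in g^p is a sum over the
  factorizations of w into p factors; rotating the factors cyclically preserves the summand, and
  since p is prime and w is not a p-th power, every rotation orbit has exactly p elements. Hence
  \<psi>(g^p) = 0 in characteristic p for every g. The f with \<psi>(h f) = 0 for all endomorphisms h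
  therefore form a T-space containing x1^p, hence containing L1; but it misses the element
  x1^p x2^p of L2, on which \<psi> takes the value 1.
\<close>

section \<open>Rotations of lists\<close>

definition rotations :: "'a list \<Rightarrow> 'a list set" where
  "rotations xs = range (\<lambda>n. rotate n xs)"

lemma self_in_rotations: "xs \<in> rotations xs"
  unfolding rotations_def by (metis id_apply rangeI rotate0)

lemma rotations_rotate: "rotations (rotate k xs) = rotations xs"
proof (cases "xs = []")
  case False
  define L where "L = length xs"
  have "k \<le> L * k" using False by (simp add: L_def Suc_le_eq)
  then have "n + L * k - k + k = n + L * k" for n by linarith
  then have "rotate n xs = rotate (n + L * k - k) (rotate k xs)" for n
    unfolding rotate_rotate by (metis L_def mod_mult_self2 rotate_conv_mod)
  then show ?thesis
    unfolding rotations_def by (auto simp: rotate_rotate)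
qed simp

lemma rotations_eq:
  assumes "ys \<in> rotations xs"
  shows "rotations ys = rotations xs"
proof -
  obtain k where "ys = rotate k xs" using assms unfolding rotations_def by blast
  then show ?thesis by (simp add: rotations_rotate)
qed

lemma rotate1_eq_self_if_rotate_eq_self:
  assumes "prime (length xs)" "rotate k xs = xs" "\<not> length xs dvd k"
  shows "rotate1 xs = xs"
proof -
  define L where "L = length xs"
  have "coprime k L"
    using prime_imp_coprime[OF assms(1,3)] by (simp add: L_def coprime_commute)
  then obtain m where m: "[k * m = 1] (mod L)"
    using cong_solve_coprime_nat by auto
  have "rotate (k * j) xs = xs" for j
    by (induction j) (simp_all add: rotate_rotate [symmetric] assms(2) add.commute)
  then have "rotate ((k * m) mod L) xs = xs"
    by (metis L_def rotate_conv_mod)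
  moreover have "(k * m) mod L = 1"
    using m prime_gt_1_nat[OF assms(1)] by (simp add: L_def cong_def)
  ultimately show ?thesis by simp
qed

lemma card_rotations_prime_length:
  assumes "prime (length xs)" "rotate1 xs \<noteq> xs"
  shows "card (rotations xs) = length xs"
proof -
  define L where "L = length xs"
  have "L > 0" using assms(1) by (metis L_def prime_gt_0_nat)
  have "rotate n xs \<in> (\<lambda>n. rotate n xs) ` {..<L}" for n
    using \<open>L > 0\<close> by (intro rev_image_eqI[of "n mod L"]) (simp_all add: L_def rotate_conv_mod[of n])
  then have "rotations xs = (\<lambda>n. rotate n xs) ` {..<L}"
    unfolding rotations_def by auto
  moreover have "inj_on (\<lambda>n. rotate n xs) {..<L}"
  proof (rule linorder_inj_onI')
    fix i j assume "i \<in> {..<L}" "j \<in> {..<L}" "i < j"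
    show "rotate i xs \<noteq> rotate j xs"
    proof
      assume eq: "rotate i xs = rotate j xs"
      have "rotate L xs = rotate (L - i) (rotate i xs)"
        using \<open>i < j\<close> \<open>j \<in> {..<L}\<close> by (simp add: rotate_rotate)
      also have "\<dots> = rotate ((j - i) + L) xs"
        using \<open>i < j\<close> \<open>j \<in> {..<L}\<close> by (simp add: eq rotate_rotate add.commute)
      finally have "rotate L xs = rotate ((j - i) + L) xs" .
      then have "rotate (j - i) xs = xs"
        by (metis L_def mod_add_self2 mod_self rotate_conv_mod rotate_id)
      moreover have "\<not> L dvd j - i" using \<open>i < j\<close> \<open>j \<in> {..<L}\<close> by (simp add: nat_dvd_not_less)
      ultimately show False using rotate1_eq_self_if_rotate_eq_self assms L_def by blast
    qed
  qed
  ultimately show ?thesis by (simp add: card_image L_def)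
qed

lemma rotate_concat_replicate: "rotate k (concat (replicate n v)) = concat (replicate n (rotate k v))"
proof (induction k)
  case (Suc k)
  have rotate1_power: "rotate1 (concat (replicate n u)) = concat (replicate n (rotate1 u))" for u :: "'a list"
  proof (cases u)
    case (Cons a u')
    have "concat (replicate m (a # u')) @ [a] = a # concat (replicate m (u' @ [a]))" for m
      by (induction m) auto
    then show ?thesis using Cons by (cases n) simp_all
  qed simp
  show ?case by (simp add: Suc rotate1_power)
qed simp

lemma rotate1_fixpoint_eq_replicate:
  assumes "rotate1 xs = xs"
  shows "xs = replicate (length xs) (hd xs)"
proof (cases "xs = []")
  case False
  then have "card (set xs) = 1"
    using rotate1_fixpoint_card assms by blast
  then obtain x where "set xs = {x}"
    by (rule card_1_singletonE)
  then show ?thesis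
    using False by (metis hd_in_set replicate_length_same singletonD)
qed simp

lemma concat_rotate1: "concat (rotate1 xss) = rotate (length (hd xss)) (concat xss)"
  by (cases xss) (simp_all add: rotate_append)

lemma prime_dvd_sum_rotation_closed:
  fixes F :: "'a list \<Rightarrow> 'b::comm_semiring_1"
  assumes "finite T" "prime p"
    and length: "\<And>xs. xs \<in> T \<Longrightarrow> length xs = p"
    and closed: "\<And>xs. xs \<in> T \<Longrightarrow> rotate1 xs \<in> T"
    and no_fixpoint: "\<And>xs. xs \<in> T \<Longrightarrow> rotate1 xs \<noteq> xs"
    and invariant: "\<And>xs. xs \<in> T \<Longrightarrow> F (rotate1 xs) = F xs"
  shows "of_nat p dvd sum F T"
proof -
  have rotate_in: "rotate n xs \<in> T" and F_rotate: "F (rotate n xs) = F xs" if "xs \<in> T" for xs n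
    using that by (induction n) (simp_all add: closed invariant)
  have rotations_sub: "rotations xs \<subseteq> T" if "xs \<in> T" for xs
    using that rotate_in unfolding rotations_def by blast
  have orbit_class: "{ys \<in> T. rotations ys = rotations xs} = rotations xs" if "xs \<in> T" for xs
    using that rotations_sub self_in_rotations rotations_eq by blast
  have orbit_sum: "sum F (rotations xs) = of_nat p * F xs" if "xs \<in> T" for xs
  proof -
    have "sum F (rotations xs) = sum (\<lambda>_. F xs) (rotations xs)"
      by (rule sum.cong) (auto simp: rotations_def F_rotate that)
    also have "\<dots> = of_nat p * F xs"
      using card_rotations_prime_length[of xs] assms(2) length[OF that] no_fixpoint[OF that] by simp
    finally show ?thesis .
  qed
  have "sum F T = (\<Sum>C\<in>rotations ` T. sum F {ys \<in> T. rotations ys = C})"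
    using \<open>finite T\<close> by (simp add: sum.group)
  also have "of_nat p dvd \<dots>"
    by (rule dvd_sum) (auto simp: orbit_class orbit_sum)
  finally show ?thesis .
qed

section \<open>The free algebra\<close>

lemma fa_zero_FA: "fa_zero \<in> FA"
  by (simp add: FA_def fa_zero_def)

lemma fa_var_FA: "fa_var i \<in> FA"
  by (simp add: FA_def fa_var_def)

lemma fa_add_FA:
  assumes "f \<in> FA" "g \<in> FA"
  shows "fa_add f g \<in> FA"
proof -
  have "{w. fa_add f g w \<noteq> 0} \<subseteq> {w. f w \<noteq> 0} \<union> {w. g w \<noteq> 0}"
    by (auto simp: fa_add_def)
  then show ?thesis
    using assms by (auto simp: FA_def fa_add_def intro: finite_subset)
qed

lemma fa_smul_FA:
  assumes "f \<in> FA"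
  shows "fa_smul c f \<in> FA"
proof -
  have "{w. fa_smul c f w \<noteq> 0} \<subseteq> {w. f w \<noteq> 0}"
    by (auto simp: fa_smul_def)
  then show ?thesis
    using assms by (auto simp: FA_def fa_smul_def intro: finite_subset)
qed

lemma fa_mul_FA:
  assumes "f \<in> FA" "g \<in> FA"
  shows "fa_mul f g \<in> FA"
proof -
  let ?Sf = "{w. f w \<noteq> 0}" and ?Sg = "{w. g w \<noteq> 0}"
  have "{w. fa_mul f g w \<noteq> 0} \<subseteq> (\<lambda>(u, v). u @ v) ` (?Sf \<times> ?Sg)"
  proof
    fix w assume "w \<in> {w. fa_mul f g w \<noteq> 0}"
    then obtain i where "f (take i w) * g (drop i w) \<noteq> 0"
      unfolding fa_mul_def by (auto elim: sum.not_neutral_contains_not_neutral)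
    then show "w \<in> (\<lambda>(u, v). u @ v) ` (?Sf \<times> ?Sg)"
      by (auto intro!: image_eqI[of _ _ "(take i w, drop i w)"])
  qed
  moreover have "finite ((\<lambda>(u, v). u @ v) ` (?Sf \<times> ?Sg))"
    using assms by (auto simp: FA_def)
  ultimately show ?thesis
    using assms by (auto simp: FA_def fa_mul_def intro: finite_subset)
qed

lemma fa_pow_FA: "f \<in> FA \<Longrightarrow> fa_pow f n \<in> FA"
proof -
  assume "f \<in> FA"
  then have "(fa_mul f ^^ m) f \<in> FA" for m
    by (induction m) (simp_all add: fa_mul_FA)
  then show ?thesis by (simp add: fa_pow_def)
qed

lemma fa_pow_Suc_Suc: "fa_pow f (Suc (Suc n)) = fa_mul f (fa_pow f (Suc n))"
  by (simp add: fa_pow_def)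

lemma is_endo_id: "is_endo id"
  by (simp add: is_endo_def)

lemma is_endo_comp: "is_endo h \<Longrightarrow> is_endo h' \<Longrightarrow> is_endo (h \<circ> h')"
  unfolding is_endo_def by (auto simp: fa_add_FA fa_smul_FA fa_mul_FA)

lemma is_endo_pow:
  assumes "is_endo h" "f \<in> FA"
  shows "h (fa_pow f n) = fa_pow (h f) n"
proof -
  have "h ((fa_mul f ^^ m) f) = (fa_mul (h f) ^^ m) (h f) \<and> (fa_mul f ^^ m) f \<in> FA" for m
    using assms by (induction m) (auto simp: is_endo_def fa_mul_FA)
  then show ?thesis by (simp add: fa_pow_def)
qed

definition fa_word :: "nat list \<Rightarrow> nat list \<Rightarrow> 'k::field" where
  "fa_word u = (\<lambda>w. if w = u then 1 else 0)"

lemma fa_var_eq_word: "fa_var i = fa_word [i]"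
  by (simp add: fa_var_def fa_word_def)

lemma fa_mul_word: "fa_mul (fa_word u) (fa_word v) = (fa_word (u @ v) :: nat list \<Rightarrow> 'k::field)"
proof
  fix w
  have split_iff: "take i w = u \<and> drop i w = v \<longleftrightarrow> i = length u \<and> w = u @ v"
    if "i \<le> length w" for i
    using that by (auto simp: append_eq_conv_conj)
  have "fa_mul (fa_word u) (fa_word v) w = (\<Sum>i\<le>length w. if i = length u \<and> w = u @ v then 1 else (0::'k))"
    unfolding fa_mul_def fa_word_def by (rule sum.cong) (auto simp: split_iff)
  also have "\<dots> = fa_word (u @ v) w"
    by (auto simp: fa_word_def)
  finally show "fa_mul (fa_word u) (fa_word v) w = (fa_word (u @ v) :: nat list \<Rightarrow> 'k) w" .
qed

lemma fa_pow_word: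
  "fa_pow (fa_word u) (Suc n) = (fa_word (concat (replicate (Suc n) u)) :: nat list \<Rightarrow> 'k::field)"
  by (induction n) (simp_all add: fa_pow_def fa_mul_word flip: fa_pow_Suc_Suc)

definition factorizations :: "nat \<Rightarrow> 'a list \<Rightarrow> 'a list list set" where
  "factorizations n w = {us. length us = n \<and> concat us = w}"

lemma finite_factorizations: "finite (factorizations n w)"
proof -
  have "length u \<le> length (concat us)" if "u \<in> set us" for u :: "'a list" and us
    using that by (induction us) auto
  then have "factorizations n w \<subseteq> {us. set us \<subseteq> {u. set u \<subseteq> set w \<and> length u \<le> length w} \<and> length us = n}"
    by (auto simp: factorizations_def)
  moreover have "finite {u. set u \<subseteq> set w \<and> length u \<le> length w}"
    by (rule finite_lists_length_le) simp
  ultimately show ?thesis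
    using finite_lists_length_eq finite_subset by blast
qed

lemma fa_pow_eq_sum_factorizations:
  "fa_pow f (Suc n) w = (\<Sum>us\<in>factorizations (Suc n) w. prod_list (map f us))"
proof (induction n arbitrary: w)
  case 0
  have "factorizations (Suc 0) w = {[w]}"
    by (auto simp: factorizations_def length_Suc_conv)
  then show ?case by (simp add: fa_pow_def)
next
  case (Suc n)
  have "fa_pow f (Suc (Suc n)) w
      = (\<Sum>i\<le>length w. \<Sum>us\<in>factorizations (Suc n) (drop i w). prod_list (map f (take i w # us)))"
    by (simp add: fa_pow_Suc_Suc fa_mul_def Suc sum_distrib_left)
  also have "\<dots> = (\<Sum>(i, us)\<in>(SIGMA i:{..length w}. factorizations (Suc n) (drop i w)).
                     prod_list (map f (take i w # us)))"
    by (rule sum.Sigma) (auto simp: finite_factorizations)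
  also have "\<dots> = (\<Sum>us\<in>factorizations (Suc (Suc n)) w. prod_list (map f us))"
    by (rule sum.reindex_bij_witness[where i = "\<lambda>us. (length (hd us), tl us)" and j = "\<lambda>(i, us). take i w # us"])
       (auto simp: factorizations_def length_Suc_conv)
  finally show ?case .
qed

section \<open>Coefficients of p-th powers on non-power words\<close>

definition nonpower_words :: "nat \<Rightarrow> nat list set" where
  "nonpower_words p =
     {w. length w = 2 * p \<and> set w \<subseteq> {1, 2} \<and> (\<forall>v. w \<noteq> concat (replicate p v))}"

definition nonpower_coeff_sum :: "nat \<Rightarrow> (nat list \<Rightarrow> 'k::field) \<Rightarrow> 'k" where
  "nonpower_coeff_sum p f = (\<Sum>w\<in>nonpower_words p. f w)"

lemma finite_nonpower_words: "finite (nonpower_words p)"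
proof -
  have "nonpower_words p \<subseteq> {w. set w \<subseteq> {1, 2} \<and> length w = 2 * p}"
    by (auto simp: nonpower_words_def)
  then show ?thesis
    by (rule finite_subset) (rule finite_lists_length_eq, simp)
qed

lemma rotate_mem_nonpower_words:
  assumes "w \<in> nonpower_words p"
  shows "rotate k w \<in> nonpower_words p"
proof -
  have "rotate k w \<noteq> concat (replicate p v)" for v
  proof
    assume "rotate k w = concat (replicate p v)"
    then have "rotations w = rotations (concat (replicate p v))"
      by (metis rotations_rotate)
    then obtain m where "w = rotate m (concat (replicate p v))"
      using self_in_rotations[of w] unfolding rotations_def by blast
    then show False
      using assms by (auto simp: nonpower_words_def rotate_concat_replicate)
  qed
  then show ?thesis
    using assms by (simp add: nonpower_words_def)
qed

lemma replicate_append_replicate_mem_nonpower_words: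
  assumes "p \<ge> 2"
  shows "replicate p 1 @ replicate p 2 \<in> nonpower_words p"
proof -
  have "replicate p 1 @ replicate p 2 \<noteq> concat (replicate p v)" for v :: "nat list"
  proof
    assume power: "replicate p 1 @ replicate p 2 = concat (replicate p v)"
    then have "p * length v = p * 2"
      by (metis length_append length_replicate mult_2_right length_concat map_replicate sum_list_replicate of_nat_id)
    then have "length v = 2"
      using assms by simp
    then obtain a b where v: "v = [a, b]"
      by (metis length_0_conv length_Suc_conv numeral_2_eq_2)
    obtain q where q: "p = Suc (Suc q)"
      using assms by (metis add_2_eq_Suc le_Suc_ex)
    have "a = 1" "b = 1"
      using power by (simp_all add: q v)
    then have "set (concat (replicate p v)) = {1}"
      using q v by simp
    moreover have "2 \<in> set (replicate p 1 @ replicate p (2::nat))"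
      using q by simp
    ultimately have "(2::nat) \<in> {1}"
      using power by metis
    then show False by simp
  qed
  then show ?thesis
    by (auto simp: nonpower_words_def)
qed

lemma nonpower_coeff_sum_fa_word:
  "w \<in> nonpower_words p \<Longrightarrow> nonpower_coeff_sum p (fa_word w :: nat list \<Rightarrow> 'k::field) = 1"
  by (simp add: nonpower_coeff_sum_def fa_word_def finite_nonpower_words)

lemma nonpower_coeff_sum_fa_pow:
  fixes f :: "nat list \<Rightarrow> 'k::field"
  assumes "prime p" "CHAR('k) = p"
  shows "nonpower_coeff_sum p (fa_pow f p) = 0"
proof -
  obtain q where q: "p = Suc q"
    using assms(1) prime_gt_0_nat gr0_implies_Suc by blast
  define T where "T = {us. length us = p \<and> concat us \<in> nonpower_words p}"
  define F where "F us = prod_list (map f us)" for us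
  have "T = (\<Union>w\<in>nonpower_words p. factorizations p w)"
    by (auto simp: T_def factorizations_def)
  then have "finite T"
    by (simp add: finite_nonpower_words finite_factorizations)
  have "nonpower_coeff_sum p (fa_pow f p)
      = (\<Sum>w\<in>nonpower_words p. \<Sum>us\<in>{us \<in> T. concat us = w}. F us)"
    unfolding nonpower_coeff_sum_def
  proof (rule sum.cong[OF refl])
    fix w assume "w \<in> nonpower_words p"
    then have "factorizations p w = {us \<in> T. concat us = w}"
      by (auto simp: factorizations_def T_def)
    then show "fa_pow f p w = (\<Sum>us\<in>{us \<in> T. concat us = w}. F us)"
      using fa_pow_eq_sum_factorizations[of f q w] by (simp add: q F_def)
  qed
  also have "\<dots> = sum F T"
    by (rule sum.group[OF \<open>finite T\<close> finite_nonpower_words]) (auto simp: T_def)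
  also have "of_nat p dvd sum F T"
  proof (rule prime_dvd_sum_rotation_closed[OF \<open>finite T\<close> assms(1)])
    fix us assume us: "us \<in> T"
    show length: "length us = p"
      using us by (simp add: T_def)
    show "rotate1 us \<in> T"
      using us by (simp add: T_def concat_rotate1 rotate_mem_nonpower_words)
    show "F (rotate1 us) = F us"
      by (cases us) (simp_all add: F_def mult.commute)
    show "rotate1 us \<noteq> us"
    proof
      assume "rotate1 us = us"
      then have "concat us = concat (replicate p (hd us))"
        using length rotate1_fixpoint_eq_replicate by metis
      then show False
        using us unfolding T_def nonpower_words_def by blast
    qed
  qed
  ultimately show ?thesis
    using assms(2) by (metis of_nat_CHAR dvd_0_left_iff)
qed

section \<open>The T-space cut out by a linear functional\<close>

lemma Tgen_least: "is_Tspace V \<Longrightarrow> S \<subseteq> V \<Longrightarrow> Tgen S \<subseteq> V"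
  by (auto simp: Tgen_def)

lemma Tgen_superset: "S \<subseteq> Tgen S"
  by (auto simp: Tgen_def)

definition Tkernel :: "((nat list \<Rightarrow> 'k::field) \<Rightarrow> 'k) \<Rightarrow> (nat list \<Rightarrow> 'k) set" where
  "Tkernel \<phi> = {f \<in> FA. \<forall>h. is_endo h \<longrightarrow> \<phi> (h f) = 0}"

lemma is_Tspace_Tkernel:
  assumes add: "\<And>f g. f \<in> FA \<Longrightarrow> g \<in> FA \<Longrightarrow> \<phi> (fa_add f g) = \<phi> f + \<phi> g"
    and smul: "\<And>c f. f \<in> FA \<Longrightarrow> \<phi> (fa_smul c f) = c * \<phi> f"
  shows "is_Tspace (Tkernel \<phi>)"
  unfolding is_Tspace_def
proof (intro conjI ballI allI impI)
  show "Tkernel \<phi> \<subseteq> FA"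
    by (auto simp: Tkernel_def)
  have "\<phi> (h fa_zero) = 0" if "is_endo h" for h
  proof -
    have "fa_smul 0 fa_zero = fa_zero"
      by (simp add: fa_smul_def fa_zero_def)
    then have "h fa_zero = fa_smul 0 (h fa_zero)"
      using that fa_zero_FA by (metis is_endo_def)
    then show ?thesis
      using that fa_zero_FA by (metis is_endo_def mult_zero_left smul)
  qed
  then show "fa_zero \<in> Tkernel \<phi>"
    by (simp add: Tkernel_def fa_zero_FA)
  fix f assume f: "f \<in> Tkernel \<phi>"
  show "fa_smul c f \<in> Tkernel \<phi>" for c
    using f by (simp add: Tkernel_def fa_smul_FA is_endo_def smul)
  show "fa_add f g \<in> Tkernel \<phi>" if "g \<in> Tkernel \<phi>" for g
    using f that by (simp add: Tkernel_def fa_add_FA is_endo_def add)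
  show "h f \<in> Tkernel \<phi>" if "is_endo h" for h
  proof -
    have "\<phi> (h' (h f)) = 0" if "is_endo h'" for h'
      using f is_endo_comp[OF that \<open>is_endo h\<close>] by (auto simp: Tkernel_def dest!: spec[of _ "h' \<circ> h"])
    then show ?thesis
      using f \<open>is_endo h\<close> by (simp add: Tkernel_def is_endo_def)
  qed
qed

lemma is_Tspace_Tkernel_nonpower_coeff_sum: "is_Tspace (Tkernel (nonpower_coeff_sum p))"
  by (rule is_Tspace_Tkernel)
     (simp_all add: nonpower_coeff_sum_def fa_add_def fa_smul_def sum.distrib sum_distrib_left)

lemma fa_pow_mem_Tkernel_nonpower_coeff_sum:
  fixes f :: "nat list \<Rightarrow> 'k::field"
  assumes "prime p" "CHAR('k) = p" "f \<in> FA"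
  shows "fa_pow f p \<in> Tkernel (nonpower_coeff_sum p)"
  using assms by (simp add: Tkernel_def fa_pow_FA is_endo_pow nonpower_coeff_sum_fa_pow)

theorem theorem5p2:
  fixes p :: nat
  assumes "prime p" and "CHAR('k::field) = p"
  shows "(L1 p :: (nat list \<Rightarrow> 'k) set) \<noteq> L2 p"
proof
  assume L1_eq_L2: "(L1 p :: (nat list \<Rightarrow> 'k) set) = L2 p"
  let ?\<psi> = "nonpower_coeff_sum p :: (nat list \<Rightarrow> 'k) \<Rightarrow> 'k"
  let ?u = "fa_pow (fa_var 1) p :: nat list \<Rightarrow> 'k"
  let ?e = "fa_mul ?u (fa_pow (fa_var 2) p)"
  have "L1 p \<subseteq> Tkernel ?\<psi>"
    unfolding L1_def
    by (intro Tgen_least is_Tspace_Tkernel_nonpower_coeff_sum)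
       (simp add: fa_pow_mem_Tkernel_nonpower_coeff_sum[OF assms fa_var_FA])
  moreover have "?e \<in> L2 p"
    using Tgen_superset[of "{?u}"] fa_var_FA unfolding L1_def L2_def
    by (intro subsetD[OF Tgen_superset]) blast
  ultimately have "?e \<in> Tkernel ?\<psi>"
    using L1_eq_L2 by blast
  then have "?\<psi> (id ?e) = 0"
    using is_endo_id unfolding Tkernel_def by blast
  moreover obtain q where "p = Suc q"
    using assms(1) prime_gt_0_nat gr0_implies_Suc by blast
  then have "?e = fa_word (replicate p 1 @ replicate p 2)"
    by (simp add: fa_var_eq_word fa_pow_word fa_mul_word)
  ultimately show False
    using replicate_append_replicate_mem_nonpower_words[OF prime_ge_2_nat[OF assms(1)]]
    by (simp add: nonpower_coeff_sum_fa_word)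
qed

end
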